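(* For every integer $N\ge 0$, let $T(N)$ be the number of tilings of a $2\times 3\times N$ box by $N$ bricks of size $1\times 2\times 3$. Then, as formal power series, \[ \sum_{N\ge 0} T(N)\,z^N=\frac{1}{1-z-z^2-3z^3}. \]
   Context: A tiling of a $k\times m\times n$ box (made of $kmn$ unit cubes) by $a\times b\times c$ bricks is a partition of the box into non-overlapping axis-parallel boxes with integer corner coordinates, each congruent (by an axis-permuting placement) to the $a\times b\times c$ brick; all orientations are allowed. Tilings related by symmetries of the box are counted as distinct. The empty tiling counts once for $N=0$. *)

theory Defs
  imports "HOL-Computational_Algebra.Formal_Power_Series"
begin

type_synonym cell = "nat \<times> nat \<times> nat"

text \<open>A brick placement: lower corner and side lengths along the three axes.\<close>
type_synonym placement = "cell \<times> (nat \<times> nat \<times> nat)"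

definition box :: "nat \<Rightarrow> nat \<Rightarrow> nat \<Rightarrow> cell set" where
  "box k m n = {(x, y, z). x < k \<and> y < m \<and> z < n}"

fun brick_cells :: "placement \<Rightarrow> cell set" where
  "brick_cells ((x, y, z), (d1, d2, d3)) =
     {(i, j, l). x \<le> i \<and> i < x + d1 \<and> y \<le> j \<and> j < y + d2 \<and> z \<le> l \<and> l < z + d3}"

definition orientations :: "nat \<Rightarrow> nat \<Rightarrow> nat \<Rightarrow> (nat \<times> nat \<times> nat) set" where
  "orientations a b c = {(a, b, c), (a, c, b), (b, a, c), (b, c, a), (c, a, b), (c, b, a)}"

definition is_tiling :: "nat \<Rightarrow> nat \<Rightarrow> nat \<Rightarrow> nat \<Rightarrow> nat \<Rightarrow> nat \<Rightarrow> placement set \<Rightarrow> bool" where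
  "is_tiling a b c k m n P \<longleftrightarrow>
     finite P \<and>
     (\<forall>p\<in>P. snd p \<in> orientations a b c) \<and>
     (\<forall>p\<in>P. \<forall>q\<in>P. p \<noteq> q \<longrightarrow> brick_cells p \<inter> brick_cells q = {}) \<and>
     (\<Union>p\<in>P. brick_cells p) = box k m n"

definition num_tilings :: "nat \<Rightarrow> nat \<Rightarrow> nat \<Rightarrow> nat \<Rightarrow> nat \<Rightarrow> nat \<Rightarrow> nat" where
  "num_tilings a b c k m n = card {P. is_tiling a b c k m n P}"

end

theory Submission
  imports Defs
begin

text \<open>Every tiling of a 2 \<times> 3 \<times> n box with n > 0 has a base layer, the bricks with a corner on
  the face z = 0, and only five base layers are possible: one flat 2 \<times> 3 \<times> 1 brick (depth 1), two
  1 \<times> 3 \<times> 2 bricks (depth 2), and three different layers of depth 3. A base layer of depth d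
  fills the box up to height d, and the remaining bricks form a tiling of a 2 \<times> 3 \<times> (n - d) box
  lifted by d. Hence T(n) = T(n - 1) + T(n - 2) + 3 T(n - 3) with T(0) = 1, which is exactly
  the coefficient recurrence of 1 / (1 - z - z^2 - 3 z^3).\<close>

unbundle fps_syntax

definition is_tiling_of :: "nat \<Rightarrow> nat \<Rightarrow> nat \<Rightarrow> cell set \<Rightarrow> placement set \<Rightarrow> bool" where
  "is_tiling_of a b c R P \<longleftrightarrow>
     finite P \<and>
     (\<forall>p\<in>P. snd p \<in> orientations a b c) \<and>
     (\<forall>p\<in>P. \<forall>q\<in>P. p \<noteq> q \<longrightarrow> brick_cells p \<inter> brick_cells q = {}) \<and>
     (\<Union>p\<in>P. brick_cells p) = R"

lemma is_tiling_iff: "is_tiling a b c k m n P \<longleftrightarrow> is_tiling_of a b c (box k m n) P"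
  by (simp add: is_tiling_def is_tiling_of_def)

lemma is_tiling_of_brick_subset: "is_tiling_of a b c R P \<Longrightarrow> p \<in> P \<Longrightarrow> brick_cells p \<subseteq> R"
  by (auto simp: is_tiling_of_def)

lemma is_tiling_of_cover: "is_tiling_of a b c R P \<Longrightarrow> x \<in> R \<Longrightarrow> \<exists>p\<in>P. x \<in> brick_cells p"
  by (auto simp: is_tiling_of_def)

lemma is_tiling_of_unique:
  "is_tiling_of a b c R P \<Longrightarrow> p \<in> P \<Longrightarrow> q \<in> P \<Longrightarrow> x \<in> brick_cells p \<Longrightarrow> x \<in> brick_cells q \<Longrightarrow> p = q"
  by (auto simp: is_tiling_of_def)

lemma is_tiling_of_disjoint:
  "is_tiling_of a b c R P \<Longrightarrow> p \<in> P \<Longrightarrow> q \<in> P \<Longrightarrow> p \<noteq> q \<Longrightarrow> brick_cells p \<inter> brick_cells q = {}"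
  by (simp add: is_tiling_of_def)

lemma corner_in_brick_cells:
  assumes "0 < a" "0 < b" "0 < c" "snd p \<in> orientations a b c"
  shows "fst p \<in> brick_cells p"
  using assms by (cases p) (auto simp: orientations_def)

lemma is_tiling_of_Un:
  assumes P: "is_tiling_of a b c R P" and Q: "is_tiling_of a b c S Q" and "R \<inter> S = {}"
  shows "is_tiling_of a b c (R \<union> S) (P \<union> Q)"
proof -
  have PQ: "brick_cells p \<inter> brick_cells q = {}" if "p \<in> P" "q \<in> Q" for p q
    using is_tiling_of_brick_subset[OF P that(1)] is_tiling_of_brick_subset[OF Q that(2)]
      \<open>R \<inter> S = {}\<close> by blast
  show ?thesis
    unfolding is_tiling_of_def
  proof (intro conjI ballI impI)
    fix p q assume "p \<in> P \<union> Q" "q \<in> P \<union> Q" "p \<noteq> q"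
    then show "brick_cells p \<inter> brick_cells q = {}"
      using is_tiling_of_disjoint[OF P] is_tiling_of_disjoint[OF Q] PQ[of p q] PQ[of q p]
      by (metis Int_commute UnE)
  qed (use P Q in \<open>auto simp: is_tiling_of_def\<close>)
qed

lemma is_tiling_of_Diff:
  assumes Q: "is_tiling_of a b c R Q" and C: "is_tiling_of a b c S C" and "C \<subseteq> Q"
  shows "is_tiling_of a b c (R - S) (Q - C)"
proof -
  have S: "S = (\<Union>p\<in>C. brick_cells p)" using C by (simp add: is_tiling_of_def)
  have "brick_cells q \<subseteq> R - S" if "q \<in> Q - C" for q
    using is_tiling_of_disjoint[OF Q] is_tiling_of_brick_subset[OF Q] that \<open>C \<subseteq> Q\<close>
    unfolding S by blast
  moreover have "x \<in> (\<Union>q\<in>Q - C. brick_cells q)" if x: "x \<in> R - S" for x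
  proof -
    obtain q where "q \<in> Q" "x \<in> brick_cells q" using is_tiling_of_cover[OF Q] x by blast
    moreover have "q \<notin> C" using x \<open>x \<in> brick_cells q\<close> unfolding S by blast
    ultimately show ?thesis by blast
  qed
  ultimately have "(\<Union>q\<in>Q - C. brick_cells q) = R - S" by blast
  with Q show ?thesis by (simp add: is_tiling_of_def)
qed

definition lift_cell :: "nat \<Rightarrow> cell \<Rightarrow> cell" where
  "lift_cell d = (\<lambda>(x, y, z). (x, y, z + d))"

definition lift_placement :: "nat \<Rightarrow> placement \<Rightarrow> placement" where
  "lift_placement d = (\<lambda>(x, s). (lift_cell d x, s))"

lemma inj_lift_cell: "inj (lift_cell d)"
  by (auto simp: inj_def lift_cell_def)

lemma inj_lift_placement: "inj (lift_placement d)"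
  by (auto simp: inj_def lift_placement_def lift_cell_def)

lemma image_lift_cell: "lift_cell d ` S = {(x, y, z). d \<le> z \<and> (x, y, z - d) \<in> S}"
proof (intro set_eqI iffI)
  fix v assume "v \<in> {(x, y, z). d \<le> z \<and> (x, y, z - d) \<in> S}"
  then obtain x y z where "v = (x, y, z)" "d \<le> z" "(x, y, z - d) \<in> S" by auto
  then show "v \<in> lift_cell d ` S"
    by (auto simp: lift_cell_def image_iff intro!: bexI[of _ "(x, y, z - d)"])
qed (auto simp: lift_cell_def)

lemma lift_cell_apply [simp]: "lift_cell d (x, y, z) = (x, y, z + d)"
  by (simp add: lift_cell_def)

lemma brick_cells_lift_placement: "brick_cells (lift_placement d p) = lift_cell d ` brick_cells p"
  by (cases p) (auto simp: lift_placement_def image_lift_cell)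

lemma snd_lift_placement [simp]: "snd (lift_placement d p) = snd p"
  by (simp add: lift_placement_def split_beta)

lemma is_tiling_of_lift_iff:
  "is_tiling_of a b c (lift_cell d ` R) (lift_placement d ` P) \<longleftrightarrow> is_tiling_of a b c R P"
proof -
  have disj:
    "(\<forall>p\<in>lift_placement d ` P. \<forall>q\<in>lift_placement d ` P.
        p \<noteq> q \<longrightarrow> brick_cells p \<inter> brick_cells q = {})
      \<longleftrightarrow> (\<forall>p\<in>P. \<forall>q\<in>P. p \<noteq> q \<longrightarrow> brick_cells p \<inter> brick_cells q = {})"
    by (simp add: brick_cells_lift_placement inj_eq[OF inj_lift_placement]
        flip: image_Int[OF inj_lift_cell])
  have cover:
    "(\<Union>p\<in>lift_placement d ` P. brick_cells p) = lift_cell d ` R \<longleftrightarrow> (\<Union>p\<in>P. brick_cells p) = R"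
    by (simp add: brick_cells_lift_placement inj_image_eq_iff[OF inj_lift_cell] flip: image_UN)
  show ?thesis
    unfolding is_tiling_of_def disj cover
    by (simp add: finite_image_iff inj_on_subset[OF inj_lift_placement])
qed

lemma is_tiling_of_lifted_region:
  assumes pos: "0 < a" "0 < b" "0 < c" and P: "is_tiling_of a b c (lift_cell d ` R) P"
  shows "\<exists>P'. P = lift_placement d ` P' \<and> is_tiling_of a b c R P'"
proof -
  have "P \<subseteq> range (lift_placement d)"
  proof
    fix p assume "p \<in> P"
    obtain x y z s where p: "p = ((x, y, z), s)" by (metis prod.exhaust)
    have "snd p \<in> orientations a b c" using P \<open>p \<in> P\<close> by (simp add: is_tiling_of_def)
    then have "fst p \<in> lift_cell d ` R"
      using corner_in_brick_cells[OF pos] is_tiling_of_brick_subset[OF P \<open>p \<in> P\<close>] by blast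
    then have "(x, y, z) \<in> lift_cell d ` R" by (simp add: p)
    then have "p = lift_placement d ((x, y, z - d), s)"
      by (auto simp: p lift_placement_def image_lift_cell)
    then show "p \<in> range (lift_placement d)" by blast
  qed
  then have "P = lift_placement d ` (lift_placement d -` P)" by blast
  with P show ?thesis using is_tiling_of_lift_iff by metis
qed

lemma is_tiling_of_disjoint_regions:
  assumes pos: "0 < a" "0 < b" "0 < c"
    and "is_tiling_of a b c R P" "is_tiling_of a b c S Q" "R \<inter> S = {}"
  shows "P \<inter> Q = {}"
proof -
  have "fst p \<in> R \<inter> S" if "p \<in> P" "p \<in> Q" for p
  proof -
    have "fst p \<in> brick_cells p"
      using corner_in_brick_cells[OF pos] that assms(4) by (simp add: is_tiling_of_def)
    then show ?thesis
      using is_tiling_of_brick_subset[OF assms(4) that(1)] is_tiling_of_brick_subset[OF assms(5) that(2)]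
      by blast
  qed
  with assms show ?thesis by blast
qed

lemma box_add_Diff: "box k m (n + d) - box k m d = lift_cell d ` box k m n"
  by (auto simp: box_def image_lift_cell)

lemma finite_tilings:
  assumes "0 < a" "0 < b" "0 < c"
  shows "finite {P. is_tiling a b c k m n P}"
proof (rule finite_subset)
  show "{P. is_tiling a b c k m n P} \<subseteq> Pow (box k m n \<times> orientations a b c)"
  proof (intro subsetI PowI)
    fix P p assume "P \<in> {P. is_tiling a b c k m n P}" "p \<in> P"
    then have P: "is_tiling_of a b c (box k m n) P" and "p \<in> P" by (simp_all add: is_tiling_iff)
    then have "snd p \<in> orientations a b c" by (simp add: is_tiling_of_def)
    moreover from this have "fst p \<in> box k m n"
      using corner_in_brick_cells[OF assms] is_tiling_of_brick_subset[OF P \<open>p \<in> P\<close>] by blast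
    ultimately show "p \<in> box k m n \<times> orientations a b c" by (simp add: mem_Times_iff)
  qed
  have "box k m n = {..<k} \<times> {..<m} \<times> {..<n}" by (auto simp: box_def)
  then show "finite (Pow (box k m n \<times> orientations a b c))" by (simp add: orientations_def)
qed

lemma box_add_split:
  "box k m (n + d) = box k m d \<union> lift_cell d ` box k m n"
  "box k m d \<inter> lift_cell d ` box k m n = {}"
  using box_add_Diff[of k m n d] by (auto simp: box_def)

lemma is_tiling_stack:
  assumes "is_tiling a b c k m d C" "is_tiling a b c k m n P"
  shows "is_tiling a b c k m (n + d) (C \<union> lift_placement d ` P)"
  using assms is_tiling_of_Un[of a b c "box k m d" C _ "lift_placement d ` P", OF _ _ box_add_split(2)]
  by (simp add: is_tiling_iff is_tiling_of_lift_iff box_add_split(1))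

lemma is_tiling_unstack:
  assumes pos: "0 < a" "0 < b" "0 < c"
    and C: "is_tiling a b c k m d C" and Q: "is_tiling a b c k m (n + d) Q" "C \<subseteq> Q"
  shows "\<exists>P. is_tiling a b c k m n P \<and> Q = C \<union> lift_placement d ` P"
proof -
  have "is_tiling_of a b c (box k m (n + d) - box k m d) (Q - C)"
    using is_tiling_of_Diff C Q by (simp add: is_tiling_iff)
  then have "is_tiling_of a b c (lift_cell d ` box k m n) (Q - C)"
    by (simp add: box_add_Diff)
  then obtain P where "Q - C = lift_placement d ` P" "is_tiling a b c k m n P"
    using is_tiling_of_lifted_region[OF pos] unfolding is_tiling_iff by blast
  with \<open>C \<subseteq> Q\<close> show ?thesis by blast
qed

lemma card_tilings_containing_block_add:
  assumes pos: "0 < a" "0 < b" "0 < c" and C: "is_tiling a b c k m d C"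
  shows "card {Q. is_tiling a b c k m (n + d) Q \<and> C \<subseteq> Q} = num_tilings a b c k m n"
proof -
  let ?stack = "\<lambda>P. C \<union> lift_placement d ` P"
  have disjoint: "C \<inter> lift_placement d ` P = {}" if "is_tiling a b c k m n P" for P
    using is_tiling_of_disjoint_regions[OF pos _ _ box_add_split(2)] C that
    by (simp add: is_tiling_iff is_tiling_of_lift_iff)
  have "inj_on ?stack {P. is_tiling a b c k m n P}"
  proof (intro inj_onI)
    fix P1 P2 assume "P1 \<in> {P. is_tiling a b c k m n P}" "P2 \<in> {P. is_tiling a b c k m n P}"
      and "?stack P1 = ?stack P2"
    with disjoint have "lift_placement d ` P1 = lift_placement d ` P2" by blast
    then show "P1 = P2" by (simp add: inj_image_eq_iff[OF inj_lift_placement])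
  qed
  then have "card (?stack ` {P. is_tiling a b c k m n P}) = num_tilings a b c k m n"
    by (simp add: card_image num_tilings_def)
  moreover have "?stack ` {P. is_tiling a b c k m n P} = {Q. is_tiling a b c k m (n + d) Q \<and> C \<subseteq> Q}"
    using is_tiling_stack[OF C] is_tiling_unstack[OF pos C] by blast
  ultimately show ?thesis by simp
qed

lemma block_depth_le:
  assumes "0 < k" "0 < m" "is_tiling a b c k m d C" "is_tiling a b c k m n Q" "C \<subseteq> Q"
  shows "d \<le> n"
proof (rule ccontr)
  assume "\<not> d \<le> n"
  then have "(0, 0, n) \<in> (\<Union>p\<in>C. brick_cells p)"
    using assms(1-3) by (simp add: is_tiling_def box_def)
  then have "(0, 0, n) \<in> box k m n" using assms(4,5) unfolding is_tiling_def by blast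
  then show False by (simp add: box_def)
qed

lemma card_tilings_containing_block:
  assumes "0 < a" "0 < b" "0 < c" "0 < k" "0 < m" and C: "is_tiling a b c k m d C"
  shows "card {Q. is_tiling a b c k m n Q \<and> C \<subseteq> Q} = (if d \<le> n then num_tilings a b c k m (n - d) else 0)"
proof (cases "d \<le> n")
  case True
  then show ?thesis using card_tilings_containing_block_add[OF assms(1-3) C, of "n - d"] by simp
next
  case False
  then have "{Q. is_tiling a b c k m n Q \<and> C \<subseteq> Q} = {}"
    using block_depth_le[OF assms(4,5) C] by blast
  with False show ?thesis by (simp only: card.empty if_False)
qed

definition base_layer :: "placement set \<Rightarrow> placement set" where
  "base_layer P = {p \<in> P. snd (snd (fst p)) = 0}"

lemma base_layer_eq_block:
  assumes pos: "0 < a" "0 < b" "0 < c"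
    and C: "is_tiling a b c k m d C" "0 < d" "base_layer C = C"
    and Q: "is_tiling a b c k m n Q" "C \<subseteq> Q"
  shows "base_layer Q = C"
proof
  show "C \<subseteq> base_layer Q" using C(3) Q(2) by (auto simp: base_layer_def)
next
  show "base_layer Q \<subseteq> C"
  proof
    fix p assume "p \<in> base_layer Q"
    then have "p \<in> Q" and z: "snd (snd (fst p)) = 0" by (simp_all add: base_layer_def)
    have Q': "is_tiling_of a b c (box k m n) Q" and C': "is_tiling_of a b c (box k m d) C"
      using Q C by (simp_all add: is_tiling_iff)
    have corner: "fst p \<in> brick_cells p"
      using corner_in_brick_cells[OF pos] Q' \<open>p \<in> Q\<close> by (simp add: is_tiling_of_def)
    then have "fst p \<in> box k m n" using is_tiling_of_brick_subset[OF Q' \<open>p \<in> Q\<close>] by blast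
    with z \<open>0 < d\<close> have "fst p \<in> box k m d" by (auto simp: box_def split_beta)
    then obtain q where "q \<in> C" "fst p \<in> brick_cells q" using is_tiling_of_cover[OF C'] by blast
    with corner have "p = q" using is_tiling_of_unique[OF Q' \<open>p \<in> Q\<close>] Q(2) by blast
    with \<open>q \<in> C\<close> show "p \<in> C" by simp
  qed
qed

lemma base_block_unique:
  assumes pos: "0 < a" "0 < b" "0 < c" and "0 < k" "0 < m"
    and C: "is_tiling a b c k m d C" "0 < d" "base_layer C = C"
    and C': "is_tiling a b c k m d' C'" "0 < d'" "base_layer C' = C'"
    and Q: "is_tiling a b c k m n Q" "C \<subseteq> Q" "C' \<subseteq> Q"
  shows "(d, C) = (d', C')"
proof -
  have "C = C'"
    using base_layer_eq_block[OF pos C Q(1,2)] base_layer_eq_block[OF pos C' Q(1,3)] by simp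
  then have "d \<le> d'" "d' \<le> d"
    using block_depth_le[OF \<open>0 < k\<close> \<open>0 < m\<close>] C(1) C'(1) by blast+
  with \<open>C = C'\<close> show ?thesis by simp
qed

lemma num_tilings_by_base_layer:
  assumes pos: "0 < a" "0 < b" "0 < c" and "0 < k" "0 < m" and "finite B"
    and B: "\<And>d C. (d, C) \<in> B \<Longrightarrow> 0 < d \<and> is_tiling a b c k m d C \<and> base_layer C = C"
    and cover: "\<And>Q. is_tiling a b c k m n Q \<Longrightarrow> \<exists>(d, C)\<in>B. C \<subseteq> Q"
  shows "num_tilings a b c k m n = (\<Sum>(d, C)\<in>B. if d \<le> n then num_tilings a b c k m (n - d) else 0)"
proof -
  define A :: "nat \<times> placement set \<Rightarrow> placement set set"
    where "A = (\<lambda>(d, C). {Q. is_tiling a b c k m n Q \<and> C \<subseteq> Q})"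
  have tilings: "{Q. is_tiling a b c k m n Q} = (\<Union>i\<in>B. A i)"
    using cover by (auto simp: A_def)
  have "finite (A i)" for i
    using finite_tilings[OF pos, of k m n] by (rule rev_finite_subset) (auto simp: A_def split: prod.split)
  moreover have "A i \<inter> A j = {}" if "i \<in> B" "j \<in> B" "i \<noteq> j" for i j
  proof -
    obtain d C d' C' where ij: "i = (d, C)" "j = (d', C')" by fastforce
    have "\<not> (is_tiling a b c k m n Q \<and> C \<subseteq> Q \<and> C' \<subseteq> Q)" for Q
      using base_block_unique[OF pos \<open>0 < k\<close> \<open>0 < m\<close>, of d C d' C' n Q] B that ij by blast
    then show ?thesis by (auto simp: A_def ij)
  qed
  ultimately have "card (\<Union>i\<in>B. A i) = (\<Sum>i\<in>B. card (A i))"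
    using \<open>finite B\<close> by (intro card_UN_disjoint) auto
  also have "\<dots> = (\<Sum>(d, C)\<in>B. if d \<le> n then num_tilings a b c k m (n - d) else 0)"
    using card_tilings_containing_block[OF pos \<open>0 < k\<close> \<open>0 < m\<close>] B
    by (intro sum.cong) (auto simp: A_def)
  finally show ?thesis by (simp add: num_tilings_def tilings)
qed

text \<open>Only meaningful for cells covered by exactly one brick of P.\<close>
definition brick_at :: "placement set \<Rightarrow> cell \<Rightarrow> placement" where
  "brick_at P x = (THE p. p \<in> P \<and> x \<in> brick_cells p)"

lemma brick_at_eq:
  "is_tiling_of a b c R P \<Longrightarrow> p \<in> P \<Longrightarrow> x \<in> brick_cells p \<Longrightarrow> brick_at P x = p"
  unfolding brick_at_def by (rule the_equality) (auto dest: is_tiling_of_unique)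

lemma brick_at:
  assumes "is_tiling_of a b c R P" "x \<in> R"
  shows "brick_at P x \<in> P" "x \<in> brick_cells (brick_at P x)"
  using is_tiling_of_cover[OF assms] brick_at_eq[OF assms(1)] by metis+

lemma brick_fits_box:
  assumes pos: "0 < a" "0 < b" "0 < c"
    and P: "is_tiling a b c k m n P" "((x, y, z), (d1, d2, d3)) \<in> P"
  shows "x + d1 \<le> k \<and> y + d2 \<le> m \<and> z + d3 \<le> n"
proof -
  have "(d1, d2, d3) \<in> orientations a b c" using P by (auto simp: is_tiling_def)
  then have "0 < d1" "0 < d2" "0 < d3" using pos by (auto simp: orientations_def)
  then have "(x + d1 - 1, y + d2 - 1, z + d3 - 1) \<in> brick_cells ((x, y, z), (d1, d2, d3))" by auto
  then have "(x + d1 - 1, y + d2 - 1, z + d3 - 1) \<in> box k m n"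
    using is_tiling_of_brick_subset[OF P(1)[unfolded is_tiling_iff] P(2)] by blast
  with \<open>0 < d1\<close> \<open>0 < d2\<close> \<open>0 < d3\<close> show ?thesis by (simp add: box_def) linarith
qed

definition base_bricks_2_3 :: "placement set" where
  "base_bricks_2_3 = {((0,0,0),(2,3,1)), ((0,0,0),(1,3,2)), ((1,0,0),(1,3,2)),
     ((0,0,0),(2,1,3)), ((0,1,0),(2,1,3)), ((0,2,0),(2,1,3)),
     ((0,0,0),(1,2,3)), ((1,0,0),(1,2,3)), ((0,1,0),(1,2,3)), ((1,1,0),(1,2,3))}"

lemma brick_at_base_2_3:
  assumes Q: "is_tiling 1 2 3 2 3 n Q" and "i < 2" "j < 3" "0 < n"
  shows "brick_at Q (i, j, 0) \<in> Q \<and> (i, j, 0) \<in> brick_cells (brick_at Q (i, j, 0))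
    \<and> brick_at Q (i, j, 0) \<in> base_bricks_2_3"
proof -
  have Q': "is_tiling_of 1 2 3 (box 2 3 n) Q" using Q by (simp add: is_tiling_iff)
  have "(i, j, 0) \<in> box 2 3 n" using assms by (simp add: box_def)
  note p = brick_at[OF Q' this]
  obtain x y z d1 d2 d3 where pe: "brick_at Q (i, j, 0) = ((x, y, z), (d1, d2, d3))" by (metis prod.exhaust)
  have "(d1, d2, d3) \<in> orientations 1 2 3" using Q' p(1) pe by (metis is_tiling_of_def snd_conv)
  moreover have "x + d1 \<le> 2" "y + d2 \<le> 3" using brick_fits_box[OF _ _ _ Q] p(1) pe by auto
  moreover have "z = 0" using p(2) pe by auto
  ultimately have "((x, y, z), (d1, d2, d3)) \<in> base_bricks_2_3"
    unfolding orientations_def base_bricks_2_3_def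
    by (elim insertE emptyE; auto simp: le_Suc_eq numeral_eq_Suc add_is_0)
  with pe have "brick_at Q (i, j, 0) \<in> base_bricks_2_3" by simp
  with p show ?thesis by simp
qed

definition first_blocks_2_3 :: "(nat \<times> placement set) set" where
  "first_blocks_2_3 =
     {(1, {((0,0,0),(2,3,1))}),
      (2, {((0,0,0),(1,3,2)), ((1,0,0),(1,3,2))}),
      (3, {((0,0,0),(2,1,3)), ((0,1,0),(2,1,3)), ((0,2,0),(2,1,3))}),
      (3, {((0,0,0),(1,2,3)), ((1,0,0),(1,2,3)), ((0,2,0),(2,1,3))}),
      (3, {((0,0,0),(2,1,3)), ((0,1,0),(1,2,3)), ((1,1,0),(1,2,3))})}"

lemma base_layer_cases_2_3:
  assumes Q: "is_tiling 1 2 3 2 3 n Q" and "0 < n"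
  shows "\<exists>(d, C)\<in>first_blocks_2_3. C \<subseteq> Q"
proof -
  define t where "t i j = brick_at Q (i, j, 0)" for i j
  have t_in: "t i j \<in> Q" and t_cell: "(i, j, 0) \<in> brick_cells (t i j)"
    and t_base: "t i j \<in> base_bricks_2_3" if "i < 2" "j < 3" for i j
    using brick_at_base_2_3[OF Q that \<open>0 < n\<close>] by (simp_all add: t_def)
  have same: "t i' j' = t i j" if "i < 2" "j < 3" "(i', j', 0) \<in> brick_cells (t i j)" for i j i' j'
    using brick_at_eq[of 1 2 3 "box 2 3 n" Q] Q t_in[OF that(1,2)] that(3)
    by (simp add: t_def is_tiling_iff)
  have "t 0 0 \<in> {((0,0,0),(2,3,1)), ((0,0,0),(1,3,2)), ((0,0,0),(2,1,3)), ((0,0,0),(1,2,3))}"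
    using t_base[of 0 0] t_cell[of 0 0] by (auto simp: base_bricks_2_3_def)
  then consider (slab) "t 0 0 = ((0,0,0),(2,3,1))" | (wall) "t 0 0 = ((0,0,0),(1,3,2))"
    | (rail) "t 0 0 = ((0,0,0),(2,1,3))" | (pillar) "t 0 0 = ((0,0,0),(1,2,3))" by blast
  then show ?thesis
  proof cases
    case slab
    then show ?thesis using t_in[of 0 0] unfolding first_blocks_2_3_def by simp
  next
    case wall
    have "t 1 0 = ((1,0,0),(1,3,2))"
      using t_base[of 1 0, simplified] t_base[of 1 2, simplified] wall
        t_cell[of 1 0, simplified] t_cell[of 1 2, simplified]
        same[of 1 0 0 0, simplified] same[of 1 2 1 0, simplified] same[of 0 0 0 2, simplified]
        same[of 1 2 0 2, simplified] same[of 1 0 1 1, simplified] same[of 1 2 1 1, simplified]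
      unfolding base_bricks_2_3_def by (elim insertE emptyE; simp)
    then show ?thesis using wall t_in[of 0 0] t_in[of 1 0] unfolding first_blocks_2_3_def by simp
  next
    case rail
    have "t 0 1 \<in> {((0,1,0),(2,1,3)), ((0,1,0),(1,2,3))}"
      using t_base[of 0 1, simplified] rail t_cell[of 0 1, simplified] same[of 0 1 0 0, simplified]
      unfolding base_bricks_2_3_def by (elim insertE emptyE; simp)
    then consider (rails) "t 0 1 = ((0,1,0),(2,1,3))" | (pillars) "t 0 1 = ((0,1,0),(1,2,3))"
      by blast
    then show ?thesis
    proof cases
      case rails
      moreover have "t 0 2 = ((0,2,0),(2,1,3))"
        using t_base[of 0 2, simplified] rail rails t_cell[of 0 2, simplified]
          same[of 0 2 0 0, simplified] same[of 0 2 0 1, simplified]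
        unfolding base_bricks_2_3_def by (elim insertE emptyE; simp)
      ultimately show ?thesis
        using rail t_in[of 0 0] t_in[of 0 1] t_in[of 0 2] unfolding first_blocks_2_3_def by simp
    next
      case pillars
      moreover have "t 1 1 = ((1,1,0),(1,2,3))"
        using t_base[of 1 1, simplified] rail pillars t_cell[of 1 1, simplified]
          same[of 1 1 0 0, simplified] same[of 0 0 1 0, simplified] same[of 1 1 1 0, simplified]
          same[of 1 1 0 1, simplified]
        unfolding base_bricks_2_3_def by (elim insertE emptyE; simp)
      ultimately show ?thesis
        using rail t_in[of 0 0] t_in[of 0 1] t_in[of 1 1] unfolding first_blocks_2_3_def by simp
    qed
  next
    case pillar
    have "t 0 2 = ((0,2,0),(2,1,3))"
      using t_base[of 0 2, simplified] pillar t_cell[of 0 2, simplified]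
        same[of 0 2 0 0, simplified] same[of 0 0 0 1, simplified] same[of 0 2 0 1, simplified]
      unfolding base_bricks_2_3_def by (elim insertE emptyE; simp)
    moreover have "t 1 0 = ((1,0,0),(1,2,3))"
      using t_base[of 1 0, simplified] pillar \<open>t 0 2 = ((0,2,0),(2,1,3))\<close> t_cell[of 1 0, simplified]
        same[of 1 0 0 0, simplified] same[of 1 0 1 2, simplified] same[of 0 2 1 2, simplified]
      unfolding base_bricks_2_3_def by (elim insertE emptyE; simp)
    ultimately show ?thesis
      using pillar t_in[of 0 0] t_in[of 1 0] t_in[of 0 2] unfolding first_blocks_2_3_def by simp
  qed
qed

lemma first_blocks_2_3_sum:
  fixes g :: "nat \<Rightarrow> nat"
  shows "(\<Sum>(d, C)\<in>first_blocks_2_3. g d) = g 1 + g 2 + 3 * g 3"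
proof -
  \<comment> \<open>tells the three base layers of depth 3 apart, so that simp can expand the sum\<close>
  have "(((0,1,0),(2,1,3)) \<in> C) \<noteq> (((0,1,0),(2,1,3)) \<in> C')
     \<or> (((0,2,0),(2,1,3)) \<in> C) \<noteq> (((0,2,0),(2,1,3)) \<in> C') \<Longrightarrow> C \<noteq> C'" for C C' :: "placement set"
    by blast
  then show ?thesis by (simp add: first_blocks_2_3_def)
qed

lemma first_blocks_2_3_tile:
  "(d, C) \<in> first_blocks_2_3 \<Longrightarrow> 0 < d \<and> is_tiling 1 2 3 2 3 d C \<and> base_layer C = C"
  unfolding first_blocks_2_3_def is_tiling_def orientations_def box_def base_layer_def
  by (elim insertE emptyE; auto simp: less_Suc_eq numeral_eq_Suc)

lemma num_tilings_empty_box: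
  assumes "0 < a" "0 < b" "0 < c"
  shows "num_tilings a b c k m 0 = 1"
proof -
  have "P = {}" if "is_tiling a b c k m 0 P" for P
  proof -
    have "fst p \<in> box k m 0" if "p \<in> P" for p
      using corner_in_brick_cells[OF assms] \<open>p \<in> P\<close> \<open>is_tiling a b c k m 0 P\<close>
      unfolding is_tiling_def by blast
    then show ?thesis by (auto simp: box_def split_beta)
  qed
  then have "{P. is_tiling a b c k m 0 P} = {{}}" by (auto simp: is_tiling_def box_def)
  then show ?thesis by (simp add: num_tilings_def)
qed

lemma num_tilings_2_3_recurrence:
  "num_tilings 1 2 3 2 3 n =
     (if n = 0 then 1 else 0)
     + (if 1 \<le> n then num_tilings 1 2 3 2 3 (n - 1) else 0)
     + (if 2 \<le> n then num_tilings 1 2 3 2 3 (n - 2) else 0)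
     + 3 * (if 3 \<le> n then num_tilings 1 2 3 2 3 (n - 3) else 0)"
proof (cases "n = 0")
  case True
  then show ?thesis using num_tilings_empty_box[of 1 2 3] by simp
next
  case False
  have "num_tilings 1 2 3 2 3 n
      = (\<Sum>(d, C)\<in>first_blocks_2_3. if d \<le> n then num_tilings 1 2 3 2 3 (n - d) else 0)"
    using False first_blocks_2_3_tile base_layer_cases_2_3
    by (intro num_tilings_by_base_layer) (auto simp: first_blocks_2_3_def)
  also have "\<dots> = (if 1 \<le> n then num_tilings 1 2 3 2 3 (n - 1) else 0)
     + (if 2 \<le> n then num_tilings 1 2 3 2 3 (n - 2) else 0)
     + 3 * (if 3 \<le> n then num_tilings 1 2 3 2 3 (n - 3) else 0)"
    by (simp add: first_blocks_2_3_sum)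
  finally show ?thesis using False by simp
qed

lemma Abs_fps_eq_inverse_of_recurrence:
  fixes f :: "nat \<Rightarrow> 'a::field"
  assumes rec: "\<And>n. f n = (if n = 0 then 1 else 0)
     + (if 1 \<le> n then f (n - 1) else 0)
     + (if 2 \<le> n then f (n - 2) else 0)
     + 3 * (if 3 \<le> n then f (n - 3) else 0)"
  shows "Abs_fps f = inverse (1 - fps_X - fps_X ^ 2 - 3 * fps_X ^ 3)"
proof -
  let ?A = "Abs_fps f"
  have "?A = 1 + fps_X * ?A + fps_X ^ 2 * ?A + 3 * (fps_X ^ 3 * ?A)"
  proof (rule fps_ext)
    fix n
    show "?A $ n = (1 + fps_X * ?A + fps_X ^ 2 * ?A + 3 * (fps_X ^ 3 * ?A)) $ n"
      using rec[of n] by (simp add: fps_X_mult_nth fps_X_power_mult_nth numeral_fps_const not_le)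
  qed
  then have "(1 - fps_X - fps_X ^ 2 - 3 * fps_X ^ 3) * ?A = 1"
    by (simp add: algebra_simps)
  then show ?thesis by (rule fps_inverse_unique[symmetric])
qed

theorem mainTheorem18:
  "Abs_fps (\<lambda>N. of_nat (num_tilings 1 2 3 2 3 N) :: rat)
     = inverse (1 - fps_X - fps_X ^ 2 - 3 * fps_X ^ 3)"
  by (rule Abs_fps_eq_inverse_of_recurrence) (subst num_tilings_2_3_recurrence, simp)

end
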